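(* Let $V$ be a finite dimensional real vector space, and let $(V,\nu,\tau,\tau^* )$ and $(V,\mu,\tau',\tau'^{*})$ be PN spaces such that $\tau^*$ and $\tau'^{*}$ are Archimedean and $\nu_p\neq\varepsilon_\infty$, $\mu_p\neq\varepsilon_\infty$ for every $p\in V$. Then $\nu$ and $\mu$ are equivalent, i.e. for every sequence $(p_m)$ in $V$ and every $p\in V$, $p_m$ strongly converges to $p$ with respect to $\nu$ if and only if $p_m$ strongly converges to $p$ with respect to $\mu$.
   Context: $\Delta^{+}$ is the set of functions $F:[-\infty,+\infty]\to[0,1]$ that are left-continuous on $\mathbb{R}$, nondecreasing, with $F(0)=0$ and $F(+\infty)=1$, ordered pointwise. $\varepsilon_0$ is the d.f. equal to $0$ for $x\le0$ and $1$ for $x>0$; $\varepsilon_\infty$ is the d.f. equal to $0$ on all of $\mathbb{R}$. A triangle function is a map $\tau:\Delta^+\times\Delta^+\to\Delta^+$ that is associative, commutative, nondecreasing in each argument, with unit $\varepsilon_0$; it is Archimedean if its only idempotents are $\varepsilon_0$ and $\varepsilon_\infty$. A PN space is a quadruple $(V,\nu,\tau,\tau^* )$ with $V$ a real vector space, $\tau\le\tau^*$ continuous triangle functions, and $\nu:V\to\Delta^+$ such that for all $p,q\in V$: (N1) $\nu_p=\varepsilon_0$ iff $p=\theta$; (N2) $\nu_{-p}=\nu_p$; (N3) $\nu_{p+q}\ge\tau(\nu_p,\nu_q)$; (N4) $\nu_p\le\tau^*(\nu_{\lambda p},\nu_{(1-\lambda)p})$ for all $\lambda\in[0,1]$. A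 sequence $(p_m)$ strongly converges to $p$ w.r.t. $\nu$ if for every $\lambda>0$ there is $N$ with $\nu_{p_m-p}(\lambda)>1-\lambda$ for $m\ge N$. *)

theory Defs
  imports "HOL-Analysis.Analysis"
begin

text \<open>Distance distribution functions: maps from the extended reals [-inf,+inf] to [0,1].\<close>
type_synonym dd = "ereal \<Rightarrow> real"

definition Delta_plus :: "dd set" where
  "Delta_plus = {F. (\<forall>x. 0 \<le> F x \<and> F x \<le> 1) \<and> mono F \<and> F 0 = 0 \<and> F \<infinity> = 1 \<and>
      (\<forall>x::real. continuous (at_left x) (\<lambda>y::real. F (ereal y)))}"

definition eps0 :: dd where
  "eps0 = (\<lambda>x. if x \<le> 0 then 0 else 1)"

definition eps_inf :: dd where
  "eps_inf = (\<lambda>x. if x = \<infinity> then 1 else 0)"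

text \<open>Weak convergence in Delta_plus: convergence at every (real) continuity point of the limit.
  On Delta_plus this is the convergence of the modified Levy metric.\<close>
definition weak_conv :: "(nat \<Rightarrow> dd) \<Rightarrow> dd \<Rightarrow> bool" where
  "weak_conv Fs F \<longleftrightarrow> (\<forall>x::real. isCont (\<lambda>y::real. F (ereal y)) x \<longrightarrow>
      (\<lambda>n. Fs n (ereal x)) \<longlonglongrightarrow> F (ereal x))"

definition triangle_function :: "(dd \<Rightarrow> dd \<Rightarrow> dd) \<Rightarrow> bool" where
  "triangle_function T \<longleftrightarrow>
     (\<forall>F\<in>Delta_plus. \<forall>G\<in>Delta_plus. T F G \<in> Delta_plus) \<and>
     (\<forall>F\<in>Delta_plus. \<forall>G\<in>Delta_plus. \<forall>H\<in>Delta_plus. T (T F G) H = T F (T G H)) \<and>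
     (\<forall>F\<in>Delta_plus. \<forall>G\<in>Delta_plus. T F G = T G F) \<and>
     (\<forall>F\<in>Delta_plus. \<forall>F'\<in>Delta_plus. \<forall>G\<in>Delta_plus. F \<le> F' \<longrightarrow> T F G \<le> T F' G) \<and>
     (\<forall>F\<in>Delta_plus. T F eps0 = F)"

text \<open>Continuity w.r.t. the (metrizable) weak-convergence topology on Delta_plus x Delta_plus,
  expressed sequentially.\<close>
definition continuous_tf :: "(dd \<Rightarrow> dd \<Rightarrow> dd) \<Rightarrow> bool" where
  "continuous_tf T \<longleftrightarrow>
     (\<forall>Fs Gs F G. (\<forall>n. Fs n \<in> Delta_plus) \<longrightarrow> (\<forall>n. Gs n \<in> Delta_plus) \<longrightarrow>
        F \<in> Delta_plus \<longrightarrow> G \<in> Delta_plus \<longrightarrow> weak_conv Fs F \<longrightarrow> weak_conv Gs G \<longrightarrow>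
        weak_conv (\<lambda>n. T (Fs n) (Gs n)) (T F G))"

definition archimedean_tf :: "(dd \<Rightarrow> dd \<Rightarrow> dd) \<Rightarrow> bool" where
  "archimedean_tf T \<longleftrightarrow> (\<forall>F\<in>Delta_plus. T F F = F \<longrightarrow> F = eps0 \<or> F = eps_inf)"

definition PN_space :: "('a::real_vector \<Rightarrow> dd) \<Rightarrow> (dd \<Rightarrow> dd \<Rightarrow> dd) \<Rightarrow> (dd \<Rightarrow> dd \<Rightarrow> dd) \<Rightarrow> bool" where
  "PN_space \<nu> T Ts \<longleftrightarrow>
     triangle_function T \<and> continuous_tf T \<and> triangle_function Ts \<and> continuous_tf Ts \<and>
     (\<forall>F\<in>Delta_plus. \<forall>G\<in>Delta_plus. T F G \<le> Ts F G) \<and>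
     (\<forall>p. \<nu> p \<in> Delta_plus) \<and>
     (\<forall>p. \<nu> p = eps0 \<longleftrightarrow> p = 0) \<and>
     (\<forall>p. \<nu> (- p) = \<nu> p) \<and>
     (\<forall>p q. T (\<nu> p) (\<nu> q) \<le> \<nu> (p + q)) \<and>
     (\<forall>p. \<forall>l::real. 0 \<le> l \<and> l \<le> 1 \<longrightarrow> \<nu> p \<le> Ts (\<nu> (l *\<^sub>R p)) (\<nu> ((1 - l) *\<^sub>R p)))"

definition strongly_converges :: "('a::real_vector \<Rightarrow> dd) \<Rightarrow> (nat \<Rightarrow> 'a) \<Rightarrow> 'a \<Rightarrow> bool" where
  "strongly_converges \<nu> ps p \<longleftrightarrow>
     (\<forall>l::real>0. \<exists>N. \<forall>m\<ge>N. \<nu> (ps m - p) (ereal l) > 1 - l)"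

end

theory Submission
  imports Defs
begin

text \<open>Strong convergence to p means that the distribution functions of p_m - p converge to
  eps0 at every x > 0. On a finite-dimensional space we show that, for every PN space with
  Archimedean tau* and no eps_inf values, this happens exactly when the coordinates of p_m - p
  with respect to a fixed basis tend to 0; this condition does not involve nu at all.

  The key step is that nu(2^-n p) is increasing in n, and by (N4) with lambda = 1/2 and the
  continuity of tau* its limit L satisfies L <= tau*(L, L) <= L. So L is idempotent, and
  since L >= nu_p is not eps_inf, L = eps0. Together with (N3) and continuity of tau this
  shows that coordinates tending to 0 imply strong convergence. Conversely, if the
  coordinate norms of a strongly null sequence stayed away from 0, normalising and applying
  Bolzano-Weierstrass to the coordinates would give a nonzero vector y with nu_y = eps0,
  contradicting (N1).\<close>

lemma eps0_in_Delta_plus: "eps0 \<in> Delta_plus"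
proof -
  have "continuous (at_left x) (\<lambda>y::real. eps0 (ereal y))" for x :: real
  proof (cases "x \<le> 0")
    case True
    have "eventually (\<lambda>y. eps0 (ereal y) = 0) (at_left x)"
      unfolding eventually_at_filter
      by (rule always_eventually) (use True in \<open>auto simp: eps0_def\<close>)
    hence "((\<lambda>y. eps0 (ereal y)) \<longlongrightarrow> 0) (at_left x)"
      by (rule tendsto_eventually)
    thus ?thesis using True by (simp add: continuous_within eps0_def)
  next
    case False
    have "eventually (\<lambda>y. y \<in> {0<..<x}) (at_left x)"
      using False by (intro eventually_at_leftI[of 0]) auto
    hence "eventually (\<lambda>y. eps0 (ereal y) = 1) (at_left x)"
      by eventually_elim (auto simp: eps0_def)
    hence "((\<lambda>y. eps0 (ereal y)) \<longlongrightarrow> 1) (at_left x)"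
      by (rule tendsto_eventually)
    thus ?thesis using False by (simp add: continuous_within eps0_def)
  qed
  moreover have "mono eps0" unfolding mono_def eps0_def by auto
  ultimately show ?thesis unfolding Delta_plus_def by (auto simp: eps0_def)
qed

lemma Delta_plus_bounds: "F \<in> Delta_plus \<Longrightarrow> 0 \<le> F x \<and> F x \<le> 1"
  by (auto simp: Delta_plus_def)

lemma Delta_plus_monoD: "F \<in> Delta_plus \<Longrightarrow> x \<le> y \<Longrightarrow> F x \<le> F y"
  by (auto simp: Delta_plus_def mono_def)

lemma Delta_plus_zero: "F \<in> Delta_plus \<Longrightarrow> F 0 = 0"
  by (auto simp: Delta_plus_def)

lemma Delta_plus_infinity: "F \<in> Delta_plus \<Longrightarrow> F \<infinity> = 1"
  by (auto simp: Delta_plus_def)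

lemma Delta_plus_left_continuous:
  "F \<in> Delta_plus \<Longrightarrow> continuous (at_left x) (\<lambda>y::real. F (ereal y))"
  by (auto simp: Delta_plus_def)

lemma Delta_plus_nonpos: "F \<in> Delta_plus \<Longrightarrow> x \<le> 0 \<Longrightarrow> F x = 0"
  using Delta_plus_monoD[of F x 0] Delta_plus_zero[of F] Delta_plus_bounds[of F x] by auto

lemma Delta_plus_le_eps0: "F \<in> Delta_plus \<Longrightarrow> F \<le> eps0"
  by (auto simp: le_fun_def eps0_def Delta_plus_nonpos Delta_plus_bounds)

lemma eps_inf_le_Delta_plus: "F \<in> Delta_plus \<Longrightarrow> eps_inf \<le> F"
  by (auto simp: le_fun_def eps_inf_def Delta_plus_infinity Delta_plus_bounds)

lemma Delta_plus_eqI_real: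
  assumes "F \<in> Delta_plus" "G \<in> Delta_plus" "\<And>x::real. F (ereal x) = G (ereal x)"
  shows "F = G"
proof
  fix z show "F z = G z"
    by (cases z rule: ereal_cases)
       (use assms in \<open>auto simp: Delta_plus_infinity Delta_plus_nonpos\<close>)
qed

lemma Delta_plus_SUP:
  assumes F: "\<And>n. F n \<in> Delta_plus" and inc: "\<And>n. F n \<le> F (Suc n)"
  shows "(\<lambda>x. SUP n. F n x) \<in> Delta_plus" and "(\<lambda>n. F n x) \<longlonglongrightarrow> (SUP n. F n x)"
proof -
  define L where "L x = (SUP n. F n x)" for x
  have bdd: "bdd_above (range (\<lambda>n. F n x))" for x
    by (rule bdd_aboveI2[where M=1]) (use Delta_plus_bounds[OF F] in auto)
  have incseq: "incseq (\<lambda>n. F n x)" for x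
    by (rule incseq_SucI) (use inc in \<open>auto simp: le_fun_def\<close>)
  show "(\<lambda>n. F n x) \<longlonglongrightarrow> (SUP n. F n x)"
    by (rule LIMSEQ_incseq_SUP[OF bdd incseq])
  have upper: "F n x \<le> L x" for n x
    unfolding L_def by (rule cSUP_upper[OF _ bdd]) simp
  have bounds: "0 \<le> L x \<and> L x \<le> 1" for x
  proof
    show "0 \<le> L x" using upper[of 0 x] Delta_plus_bounds[OF F, of 0 x] by linarith
    show "L x \<le> 1" unfolding L_def by (rule cSUP_least) (auto simp: Delta_plus_bounds[OF F])
  qed
  have mono: "mono L"
    by (rule monoI) (unfold L_def, rule cSUP_mono[OF _ bdd], auto intro: Delta_plus_monoD[OF F])
  have "continuous (at_left x) (\<lambda>y::real. L (ereal y))" for x :: real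
    unfolding continuous_within
  proof (rule order_tendstoI)
    fix a assume "a < L (ereal x)"
    then obtain n where n: "a < F n (ereal x)"
      unfolding L_def using less_cSUP_iff[OF _ bdd] by blast
    have "((\<lambda>y. F n (ereal y)) \<longlongrightarrow> F n (ereal x)) (at_left x)"
      using Delta_plus_left_continuous[OF F] unfolding continuous_within .
    hence "eventually (\<lambda>y. a < F n (ereal y)) (at_left x)"
      using n by (rule order_tendstoD)
    thus "eventually (\<lambda>y. a < L (ereal y)) (at_left x)"
      by eventually_elim (use upper in \<open>fastforce intro: less_le_trans\<close>)
  next
    fix a assume "L (ereal x) < a"
    moreover have "L (ereal y) \<le> L (ereal x)" if "y < x" for y
      using that mono by (auto intro: monoD)
    ultimately show "eventually (\<lambda>y. L (ereal y) < a) (at_left x)"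
      unfolding eventually_at_filter by (auto intro: always_eventually le_less_trans)
  qed
  moreover have "L 0 = 0" "L \<infinity> = 1"
    unfolding L_def by (simp_all add: Delta_plus_zero[OF F] Delta_plus_infinity[OF F])
  ultimately show "(\<lambda>x. SUP n. F n x) \<in> Delta_plus"
    using bounds mono unfolding Delta_plus_def L_def[symmetric] by blast
qed

lemma weak_conv_eps0_iff:
  assumes "\<And>n. F n \<in> Delta_plus"
  shows "weak_conv F eps0 \<longleftrightarrow> (\<forall>x::real>0. (\<lambda>n. F n (ereal x)) \<longlonglongrightarrow> 1)"
proof
  assume conv: "weak_conv F eps0"
  show "\<forall>x::real>0. (\<lambda>n. F n (ereal x)) \<longlonglongrightarrow> 1"
  proof (intro allI impI)
    fix x :: real assume "x > 0"
    hence "eventually (\<lambda>y. y \<in> {0<..}) (nhds x)"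
      by (intro eventually_nhds_in_open) auto
    hence "eventually (\<lambda>y. eps0 (ereal y) = 1) (nhds x)"
      by eventually_elim (auto simp: eps0_def)
    hence "isCont (\<lambda>y. eps0 (ereal y)) x \<longleftrightarrow> isCont (\<lambda>y. 1::real) x"
      by (rule isCont_cong)
    hence "isCont (\<lambda>y. eps0 (ereal y)) x" by simp
    thus "(\<lambda>n. F n (ereal x)) \<longlonglongrightarrow> 1"
      using conv \<open>x > 0\<close> unfolding weak_conv_def by (auto simp: eps0_def)
  qed
next
  assume "\<forall>x::real>0. (\<lambda>n. F n (ereal x)) \<longlonglongrightarrow> 1"
  thus "weak_conv F eps0"
    unfolding weak_conv_def using Delta_plus_nonpos[OF assms] by (auto simp: eps0_def not_less)
qed

lemma weak_conv_limit_le: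
  assumes le: "\<And>n. F n \<le> G n" and lim: "\<And>x. (\<lambda>n. F n x) \<longlonglongrightarrow> L x"
    and conv: "weak_conv G H" and L: "L \<in> Delta_plus" and H: "H \<in> Delta_plus"
  shows "L \<le> H"
proof -
  have at_cont: "L (ereal x) \<le> H (ereal x)" if "isCont (\<lambda>y. H (ereal y)) x" for x
  proof (rule LIMSEQ_le[OF lim])
    show "(\<lambda>n. G n (ereal x)) \<longlonglongrightarrow> H (ereal x)"
      using conv that unfolding weak_conv_def by blast
  qed (use le in \<open>auto simp: le_fun_def\<close>)
  \<comment> \<open>The continuity points of the monotone H are dense and L is left-continuous.\<close>
  have real: "L (ereal x) \<le> H (ereal x)" for x
  proof (rule ccontr)
    assume "\<not> ?thesis"
    hence "H (ereal x) < L (ereal x)" by simp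
    moreover have "((\<lambda>y. L (ereal y)) \<longlongrightarrow> L (ereal x)) (at_left x)"
      using Delta_plus_left_continuous[OF L] unfolding continuous_within .
    ultimately have "eventually (\<lambda>y. H (ereal x) < L (ereal y)) (at_left x)"
      by (rule order_tendstoD(1)[rotated])
    then obtain b where b: "b < x" "\<And>y. b < y \<Longrightarrow> y < x \<Longrightarrow> H (ereal x) < L (ereal y)"
      unfolding eventually_at_left_field by blast
    have "mono (\<lambda>y::real. H (ereal y))"
      using Delta_plus_monoD[OF H] by (auto intro: monoI)
    then obtain y where y: "y \<in> {b<..<x}" "isCont (\<lambda>y. H (ereal y)) y"
      using open_minus_countable[OF mono_ctble_discont, of _ "{b<..<x}"] b(1) by force
    have "L (ereal y) \<le> H (ereal y)" using at_cont y(2) .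
    also have "\<dots> \<le> H (ereal x)" using y(1) Delta_plus_monoD[OF H] by simp
    also have "\<dots> < L (ereal y)" using b(2) y(1) by simp
    finally show False by simp
  qed
  show ?thesis
  proof (rule le_funI)
    fix z show "L z \<le> H z"
      by (cases z rule: ereal_cases)
         (use real L H in \<open>auto simp: Delta_plus_infinity Delta_plus_nonpos Delta_plus_bounds\<close>)
  qed
qed

lemma triangle_function_le_left:
  assumes T: "triangle_function T" and F: "F \<in> Delta_plus" and G: "G \<in> Delta_plus"
  shows "T F G \<le> F"
proof -
  have "T F G = T G F" using T F G unfolding triangle_function_def by blast
  also have "\<dots> \<le> T eps0 F"
    using T F G eps0_in_Delta_plus Delta_plus_le_eps0[OF G] unfolding triangle_function_def by blast
  also have "\<dots> = T F eps0" using T F eps0_in_Delta_plus unfolding triangle_function_def by blast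
  also have "\<dots> = F" using T F unfolding triangle_function_def by blast
  finally show ?thesis .
qed

lemma continuous_tfD:
  assumes "continuous_tf T" "\<And>n. F n \<in> Delta_plus" "\<And>n. G n \<in> Delta_plus"
    "F' \<in> Delta_plus" "G' \<in> Delta_plus" "weak_conv F F'" "weak_conv G G'"
  shows "weak_conv (\<lambda>n. T (F n) (G n)) (T F' G')"
  using assms unfolding continuous_tf_def by blast

lemma bounded_family_convergent_subseq:
  fixes f :: "nat \<Rightarrow> 'b \<Rightarrow> real"
  assumes "finite B" and bounded: "\<And>m b. b \<in> B \<Longrightarrow> \<bar>f m b\<bar> \<le> C"
  obtains s g where "strict_mono s" "\<And>b. b \<in> B \<Longrightarrow> (\<lambda>m. f (s m) b) \<longlonglongrightarrow> g b"
proof -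
  from \<open>finite B\<close> bounded
  have "\<exists>s g. strict_mono s \<and> (\<forall>b\<in>B. (\<lambda>m. f (s m) b) \<longlonglongrightarrow> g b)"
  proof (induction B rule: finite_induct)
    case empty
    show ?case using strict_mono_id by blast
  next
    case (insert a B)
    then obtain s g where s: "strict_mono s" and g: "\<forall>b\<in>B. (\<lambda>m. f (s m) b) \<longlonglongrightarrow> g b"
      by blast
    have "bounded (range (\<lambda>m. f (s m) a))"
      unfolding bounded_real by (auto intro!: exI[of _ C] insert.prems)
    then obtain l r where r: "strict_mono r" and l: "((\<lambda>m. f (s m) a) \<circ> r) \<longlonglongrightarrow> l"
      using bounded_imp_convergent_subsequence by blast
    have "(\<lambda>m. f (s (r m)) b) \<longlonglongrightarrow> (g(a := l)) b" if "b \<in> insert a B" for b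
    proof (cases "b = a")
      case True thus ?thesis using l by (simp add: o_def)
    next
      case False
      hence "((\<lambda>m. f (s m) b) \<circ> r) \<longlonglongrightarrow> g b"
        using that g r by (auto intro: LIMSEQ_subseq_LIMSEQ)
      thus ?thesis using False by (simp add: o_def)
    qed
    thus ?case
      using strict_mono_o[OF s r]
      by (intro exI[of _ "s \<circ> r"] exI[of _ "g(a := l)"]) (simp add: o_def)
  qed
  thus ?thesis using that by blast
qed

lemma nonneg_not_LIMSEQ_zero_subseq:
  fixes X :: "nat \<Rightarrow> real"
  assumes "\<And>n. 0 \<le> X n" and "\<not> X \<longlonglongrightarrow> 0"
  obtains \<delta> and r :: "nat \<Rightarrow> nat" where "\<delta> > 0" "strict_mono r" "\<And>n. \<delta> \<le> X (r n)"
proof -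
  have "X \<longlonglongrightarrow> 0" if "\<forall>\<delta>>0. eventually (\<lambda>n. X n < \<delta>) sequentially"
    unfolding tendsto_iff dist_real_def using that assms(1) by simp
  then obtain \<delta> where "\<delta> > 0" and "\<not> eventually (\<lambda>n. X n < \<delta>) sequentially"
    using assms(2) by blast
  hence "infinite {n. \<delta> \<le> X n}"
    unfolding infinite_nat_iff_unbounded_le eventually_sequentially by (auto simp: not_less)
  from infinite_enumerate[OF this]
  obtain r :: "nat \<Rightarrow> nat" where "strict_mono r" "\<forall>n. r n \<in> {n. \<delta> \<le> X n}"
    by blast
  show ?thesis
    by (rule that[OF \<open>\<delta> > 0\<close> \<open>strict_mono r\<close>]) (use \<open>\<forall>n. r n \<in> _\<close> in simp)
qed

definition PN_null :: "('a::real_vector \<Rightarrow> dd) \<Rightarrow> (nat \<Rightarrow> 'a) \<Rightarrow> bool" where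
  "PN_null \<nu> xs \<longleftrightarrow> (\<forall>x::real>0. (\<lambda>m. \<nu> (xs m) (ereal x)) \<longlonglongrightarrow> 1)"

lemma PN_null_subseq: "PN_null \<nu> xs \<Longrightarrow> strict_mono r \<Longrightarrow> PN_null \<nu> (\<lambda>m. xs (r m))"
  unfolding PN_null_def using LIMSEQ_subseq_LIMSEQ[unfolded o_def] by blast

locale PN =
  fixes \<nu> :: "'a::real_vector \<Rightarrow> dd" and T Ts :: "dd \<Rightarrow> dd \<Rightarrow> dd"
  assumes PN_space: "PN_space \<nu> T Ts"
begin

lemma nu_in_Delta_plus: "\<nu> p \<in> Delta_plus"
  using PN_space by (simp add: PN_space_def)

lemma nu_le_one: "\<nu> p x \<le> 1"
  using Delta_plus_bounds[OF nu_in_Delta_plus] by blast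

lemma nu_eq_eps0_iff: "\<nu> p = eps0 \<longleftrightarrow> p = 0"
  using PN_space unfolding PN_space_def by blast

lemma nu_uminus: "\<nu> (- p) = \<nu> p"
  using PN_space unfolding PN_space_def by blast

lemma nu_add: "T (\<nu> p) (\<nu> q) \<le> \<nu> (p + q)"
  using PN_space unfolding PN_space_def by blast

lemma nu_split: "0 \<le> l \<Longrightarrow> l \<le> 1 \<Longrightarrow> \<nu> p \<le> Ts (\<nu> (l *\<^sub>R p)) (\<nu> ((1 - l) *\<^sub>R p))"
  using PN_space unfolding PN_space_def by blast

lemma triangle_functions:
  "triangle_function T" "continuous_tf T" "triangle_function Ts" "continuous_tf Ts"
  using PN_space unfolding PN_space_def by blast+

lemma nu_le_scaleR:
  assumes "\<bar>c\<bar> \<le> 1"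
  shows "\<nu> q \<le> \<nu> (c *\<^sub>R q)"
proof -
  have shrink: "\<nu> q \<le> \<nu> (l *\<^sub>R q)" if "0 \<le> l" "l \<le> 1" for l
  proof -
    have "\<nu> q \<le> Ts (\<nu> (l *\<^sub>R q)) (\<nu> ((1 - l) *\<^sub>R q))"
      using nu_split[OF that] .
    also have "\<dots> \<le> \<nu> (l *\<^sub>R q)"
      using triangle_functions(3) nu_in_Delta_plus nu_in_Delta_plus
      by (rule triangle_function_le_left)
    finally show ?thesis .
  qed
  show ?thesis
  proof (cases "c \<ge> 0")
    case True thus ?thesis using shrink assms by auto
  next
    case False
    have "\<nu> (c *\<^sub>R q) = \<nu> ((- c) *\<^sub>R q)"
      using nu_uminus[of "c *\<^sub>R q"] by simp
    thus ?thesis using shrink[of "- c"] False assms by auto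
  qed
qed

lemma strongly_converges_iff_PN_null:
  "strongly_converges \<nu> ps p \<longleftrightarrow> PN_null \<nu> (\<lambda>m. ps m - p)"
  unfolding strongly_converges_def PN_null_def
proof safe
  fix x :: real
  assume strong: "\<forall>l>0. \<exists>N. \<forall>m\<ge>N. 1 - l < \<nu> (ps m - p) (ereal l)" and "0 < x"
  show "(\<lambda>m. \<nu> (ps m - p) (ereal x)) \<longlonglongrightarrow> 1"
  proof (rule order_tendstoI)
    fix a :: real assume "a < 1"
    define l where "l = min x (1 - a)"
    have "l > 0" "a \<le> 1 - l" using \<open>0 < x\<close> \<open>a < 1\<close> by (simp_all add: l_def)
    have l_le_x: "\<nu> (ps m - p) (ereal l) \<le> \<nu> (ps m - p) (ereal x)" for m
      using Delta_plus_monoD[OF nu_in_Delta_plus] by (simp add: l_def)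
    from strong \<open>l > 0\<close>
    have "eventually (\<lambda>m. 1 - l < \<nu> (ps m - p) (ereal l)) sequentially"
      unfolding eventually_sequentially by blast
    thus "eventually (\<lambda>m. a < \<nu> (ps m - p) (ereal x)) sequentially"
    proof eventually_elim
      case (elim m)
      thus ?case using l_le_x[of m] \<open>a \<le> 1 - l\<close> by linarith
    qed
  next
    fix a :: real assume "1 < a"
    thus "eventually (\<lambda>m. \<nu> (ps m - p) (ereal x) < a) sequentially"
      using nu_le_one by (auto intro: always_eventually le_less_trans)
  qed
next
  fix l :: real
  assume "\<forall>x>0. (\<lambda>m. \<nu> (ps m - p) (ereal x)) \<longlonglongrightarrow> 1" and "0 < l"
  hence "eventually (\<lambda>m. 1 - l < \<nu> (ps m - p) (ereal l)) sequentially"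
    by (intro order_tendstoD(1)) auto
  thus "\<exists>N. \<forall>m\<ge>N. 1 - l < \<nu> (ps m - p) (ereal l)"
    unfolding eventually_sequentially .
qed

lemma PN_null_iff_weak_conv: "PN_null \<nu> xs \<longleftrightarrow> weak_conv (\<lambda>m. \<nu> (xs m)) eps0"
  unfolding PN_null_def by (rule weak_conv_eps0_iff[OF nu_in_Delta_plus, symmetric])

lemma PN_null_mono:
  assumes "PN_null \<nu> xs" "\<And>m. \<nu> (xs m) \<le> \<nu> (ys m)"
  shows "PN_null \<nu> ys"
  unfolding PN_null_def
proof (intro allI impI)
  fix x :: real assume "x > 0"
  have "(\<lambda>m. \<nu> (xs m) (ereal x)) \<longlonglongrightarrow> 1"
    using assms(1) \<open>x > 0\<close> unfolding PN_null_def by blast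
  thus "(\<lambda>m. \<nu> (ys m) (ereal x)) \<longlonglongrightarrow> 1"
    by (rule real_tendsto_sandwich[OF _ _ _ tendsto_const, rotated 2])
       (use assms(2) in \<open>auto simp: le_fun_def nu_le_one\<close>)
qed

lemma PN_null_add:
  assumes "PN_null \<nu> xs" "PN_null \<nu> ys"
  shows "PN_null \<nu> (\<lambda>m. xs m + ys m)"
proof -
  define G where "G m = T (\<nu> (xs m)) (\<nu> (ys m))" for m
  have G: "G m \<in> Delta_plus" for m
    using triangle_functions(1) nu_in_Delta_plus unfolding triangle_function_def G_def by blast
  have "T eps0 eps0 = eps0"
    using triangle_functions(1) eps0_in_Delta_plus unfolding triangle_function_def by blast
  moreover have "weak_conv G (T eps0 eps0)"
    using assms unfolding PN_null_iff_weak_conv G_def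
    by (intro continuous_tfD[OF triangle_functions(2)] nu_in_Delta_plus eps0_in_Delta_plus)
  ultimately have G_lim: "(\<lambda>m. G m (ereal x)) \<longlonglongrightarrow> 1" if "x > 0" for x
    using weak_conv_eps0_iff[OF G] that by simp
  have "G m (ereal x) \<le> \<nu> (xs m + ys m) (ereal x)" for m x
    using nu_add unfolding G_def le_fun_def by blast
  then show ?thesis
    unfolding PN_null_def
    by (auto intro!: real_tendsto_sandwich[OF _ _ G_lim tendsto_const] simp: nu_le_one)
qed

lemma PN_null_diff:
  assumes "PN_null \<nu> xs" "PN_null \<nu> ys"
  shows "PN_null \<nu> (\<lambda>m. xs m - ys m)"
proof -
  have "PN_null \<nu> (\<lambda>m. - ys m)"
    using assms(2) unfolding PN_null_def nu_uminus .
  from PN_null_add[OF assms(1) this] show ?thesis by simp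
qed

lemma PN_null_const_iff: "PN_null \<nu> (\<lambda>m. y) \<longleftrightarrow> y = 0"
proof
  assume "PN_null \<nu> (\<lambda>m. y)"
  hence "\<nu> y (ereal x) = eps0 (ereal x)" for x
    unfolding PN_null_def LIMSEQ_const_iff
    by (cases "x > 0") (auto simp: eps0_def Delta_plus_nonpos[OF nu_in_Delta_plus])
  hence "\<nu> y = eps0"
    by (intro Delta_plus_eqI_real nu_in_Delta_plus eps0_in_Delta_plus)
  thus "y = 0" using nu_eq_eps0_iff by blast
next
  assume "y = 0"
  thus "PN_null \<nu> (\<lambda>m. y)"
    using nu_eq_eps0_iff[of 0] by (simp add: PN_null_def eps0_def)
qed

end

definition coord_norm :: "'a::real_vector set \<Rightarrow> 'a \<Rightarrow> real" where
  "coord_norm B x = (\<Sum>b\<in>B. \<bar>representation B x b\<bar>)"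

lemma coord_norm_nonneg: "0 \<le> coord_norm B x"
  unfolding coord_norm_def by (rule sum_nonneg) simp

lemma abs_representation_le_coord_norm:
  assumes "finite B"
  shows "\<bar>representation B x b\<bar> \<le> coord_norm B x"
proof (cases "b \<in> B")
  case True
  thus ?thesis unfolding coord_norm_def using assms by (intro member_le_sum) auto
next
  case False
  hence "representation B x b = 0" using real_vector.representation_ne_zero by blast
  thus ?thesis using coord_norm_nonneg by simp
qed

lemma coord_norm_scaleR:
  assumes "independent B" "x \<in> span B"
  shows "coord_norm B (c *\<^sub>R x) = \<bar>c\<bar> * coord_norm B x"
  unfolding coord_norm_def real_vector.representation_scale[OF assms]
  by (simp add: abs_mult sum_distrib_left)

lemma finite_basis_if_finite_span:
  fixes S :: "'a::real_vector set"
  assumes "finite S" "span S = UNIV"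
  obtains B :: "'a set" where "finite B" "independent B" "span B = UNIV"
proof -
  obtain B where B: "B \<subseteq> S" "independent B" "S \<subseteq> span B"
    by (rule real_vector.maximal_independent_subset)
  have "span S \<subseteq> span B"
    using B(3) by (rule real_vector.span_minimal) (rule real_vector.subspace_span)
  hence "span B = UNIV" using assms(2) by auto
  with finite_subset[OF B(1) assms(1)] B(2) show ?thesis by (rule that)
qed

locale archimedean_PN = PN +
  assumes archimedean: "archimedean_tf Ts" and nu_ne_eps_inf: "\<nu> p \<noteq> eps_inf"
begin

lemma PN_null_halvings: "PN_null \<nu> (\<lambda>n. (1/2::real)^n *\<^sub>R p)"
proof -
  define F where "F n = \<nu> ((1/2::real)^n *\<^sub>R p)" for n
  define L where "L = (\<lambda>x. SUP n. F n x)"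
  have F: "F n \<in> Delta_plus" for n
    unfolding F_def by (rule nu_in_Delta_plus)
  have halve: "(1/2::real) *\<^sub>R ((1/2)^n *\<^sub>R p) = (1/2)^Suc n *\<^sub>R p" for n
    by simp
  have F_le_Suc: "F n \<le> F (Suc n)" for n
    unfolding F_def halve[symmetric] by (rule nu_le_scaleR) simp
  have F_le_Ts: "F n \<le> Ts (F (Suc n)) (F (Suc n))" for n
    using nu_split[of "1/2" "(1/2)^n *\<^sub>R p"] unfolding F_def halve by simp
  have L: "L \<in> Delta_plus" and F_lim: "\<And>x. (\<lambda>n. F n x) \<longlonglongrightarrow> L x"
    unfolding L_def using Delta_plus_SUP[where F=F, OF F F_le_Suc] by simp_all
  have "weak_conv (\<lambda>n. F (Suc n)) L"
    unfolding weak_conv_def using F_lim LIMSEQ_Suc by blast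
  hence "weak_conv (\<lambda>n. Ts (F (Suc n)) (F (Suc n))) (Ts L L)"
    using continuous_tfD[OF triangle_functions(4) F F L L] by blast
  moreover have Ts_LL: "Ts L L \<in> Delta_plus"
    using triangle_functions(3) L unfolding triangle_function_def by blast
  ultimately have "L \<le> Ts L L"
    using weak_conv_limit_le[OF F_le_Ts F_lim _ L] by blast
  moreover have "Ts L L \<le> L"
    by (rule triangle_function_le_left[OF triangle_functions(3) L L])
  ultimately have "Ts L L = L" by (rule antisym[rotated])
  hence "L = eps0 \<or> L = eps_inf"
    using archimedean L unfolding archimedean_tf_def by blast
  moreover have "L \<noteq> eps_inf"
  proof
    assume "L = eps_inf"
    have "incseq (\<lambda>n. F n x)" for x
      by (rule incseq_SucI) (use F_le_Suc in \<open>simp add: le_fun_def\<close>)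
    hence "F 0 \<le> L"
      using incseq_le[OF _ F_lim] unfolding le_fun_def by blast
    hence "\<nu> p \<le> L"
      unfolding F_def by simp
    hence "\<nu> p = eps_inf"
      using \<open>L = eps_inf\<close> eps_inf_le_Delta_plus[OF nu_in_Delta_plus] by (simp add: antisym)
    thus False using nu_ne_eps_inf by contradiction
  qed
  ultimately have "L = eps0" by blast
  show ?thesis
    unfolding PN_null_def
  proof (intro allI impI)
    fix x :: real assume "x > 0"
    thus "(\<lambda>n. \<nu> ((1/2)^n *\<^sub>R p) (ereal x)) \<longlonglongrightarrow> 1"
      using F_lim[of "ereal x"] \<open>L = eps0\<close> by (simp add: F_def eps0_def)
  qed
qed

lemma PN_null_scaleR:
  assumes "c \<longlonglongrightarrow> 0"
  shows "PN_null \<nu> (\<lambda>m. c m *\<^sub>R p)"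
  unfolding PN_null_def
proof (intro allI impI order_tendstoI)
  fix x a :: real assume "x > 0" "a < 1"
  have "(\<lambda>n. \<nu> ((1/2::real)^n *\<^sub>R p) (ereal x)) \<longlonglongrightarrow> 1"
    using PN_null_halvings \<open>x > 0\<close> unfolding PN_null_def by blast
  from order_tendstoD(1)[OF this \<open>a < 1\<close>]
  obtain n where n: "a < \<nu> ((1/2::real)^n *\<^sub>R p) (ereal x)"
    unfolding eventually_sequentially by blast
  have "(0::real) < (1/2)^n" by simp
  hence "eventually (\<lambda>m. \<bar>c m\<bar> < (1/2)^n) sequentially"
    using assms unfolding tendsto_iff dist_real_def by simp
  thus "eventually (\<lambda>m. a < \<nu> (c m *\<^sub>R p) (ereal x)) sequentially"
  proof eventually_elim
    case (elim m)
    have "\<bar>c m * 2^n\<bar> \<le> 1"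
      using elim by (simp add: abs_mult power_one_over field_simps)
    hence "\<nu> ((1/2::real)^n *\<^sub>R p) \<le> \<nu> ((c m * 2^n) *\<^sub>R ((1/2::real)^n *\<^sub>R p))"
      by (rule nu_le_scaleR)
    hence "\<nu> ((1/2::real)^n *\<^sub>R p) \<le> \<nu> (c m *\<^sub>R p)"
      by (simp add: power_one_over)
    thus ?case using n by (auto simp: le_fun_def intro: less_le_trans)
  qed
next
  fix x a :: real assume "1 < a"
  thus "eventually (\<lambda>m. \<nu> (c m *\<^sub>R p) (ereal x) < a) sequentially"
    using nu_le_one by (auto intro: always_eventually le_less_trans)
qed

lemma PN_null_sum:
  assumes "finite B" "\<And>b. b \<in> B \<Longrightarrow> (\<lambda>m. c m b) \<longlonglongrightarrow> 0"
  shows "PN_null \<nu> (\<lambda>m. \<Sum>b\<in>B. c m b *\<^sub>R b)"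
  using assms
proof (induction B rule: finite_induct)
  case empty
  thus ?case using PN_null_const_iff by simp
next
  case (insert a B)
  have "PN_null \<nu> (\<lambda>m. c m a *\<^sub>R a)"
    using insert.prems by (intro PN_null_scaleR) simp
  moreover have "PN_null \<nu> (\<lambda>m. \<Sum>b\<in>B. c m b *\<^sub>R b)"
    using insert.prems by (intro insert.IH) simp
  ultimately show ?case
    using PN_null_add insert.hyps by simp
qed

lemma PN_null_sum_limit_eq_zero:
  assumes "finite B" "PN_null \<nu> (\<lambda>m. \<Sum>b\<in>B. f m b *\<^sub>R b)"
    and "\<And>b. b \<in> B \<Longrightarrow> (\<lambda>m. f m b) \<longlonglongrightarrow> g b"
  shows "(\<Sum>b\<in>B. g b *\<^sub>R b) = 0"
proof -
  have "PN_null \<nu> (\<lambda>m. \<Sum>b\<in>B. (f m b - g b) *\<^sub>R b)"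
    using assms(1) by (rule PN_null_sum) (use assms(3) in \<open>simp add: LIM_zero\<close>)
  from PN_null_diff[OF assms(2) this] show ?thesis
    by (simp add: PN_null_const_iff scaleR_diff_left sum_subtractf)
qed

lemma not_PN_null_if_coord_norm_eq:
  assumes B: "finite B" "independent B" "span B = UNIV"
    and "\<delta> > 0" and norm_eq: "\<And>m. coord_norm B (xs m) = \<delta>"
  shows "\<not> PN_null \<nu> xs"
proof
  assume null: "PN_null \<nu> xs"
  have "\<bar>representation B (xs m) b\<bar> \<le> \<delta>" for m b
    using abs_representation_le_coord_norm[OF B(1)] norm_eq by metis
  then obtain s g where s: "strict_mono s"
    and g: "\<And>b. b \<in> B \<Longrightarrow> (\<lambda>m. representation B (xs (s m)) b) \<longlonglongrightarrow> g b"
    using bounded_family_convergent_subseq[OF B(1), of "\<lambda>m b. representation B (xs m) b" \<delta>]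
    by blast
  have "(\<Sum>b\<in>B. representation B x b *\<^sub>R b) = x" for x
    using real_vector.sum_representation_eq[OF B(2) _ B(1) order_refl] B(3) by blast
  hence "PN_null \<nu> (\<lambda>m. \<Sum>b\<in>B. representation B (xs (s m)) b *\<^sub>R b)"
    using PN_null_subseq[OF null s] by simp
  hence "(\<Sum>b\<in>B. g b *\<^sub>R b) = 0"
    by (rule PN_null_sum_limit_eq_zero[OF B(1)]) (rule g)
  hence g0: "g b = 0" if "b \<in> B" for b
    using B(2) that unfolding real_vector.dependent_finite[OF B(1)] by blast
  have "(\<lambda>m. coord_norm B (xs (s m))) \<longlonglongrightarrow> (\<Sum>b\<in>B. \<bar>g b\<bar>)"
    unfolding coord_norm_def by (intro tendsto_sum tendsto_rabs g)
  hence "(\<Sum>b\<in>B. \<bar>g b\<bar>) = \<delta>"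
    unfolding norm_eq LIMSEQ_const_iff by simp
  thus False using g0 \<open>\<delta> > 0\<close> by simp
qed

lemma PN_null_iff_coord_norm_tendsto_zero:
  assumes B: "finite B" "independent B" "span B = UNIV"
  shows "PN_null \<nu> xs \<longleftrightarrow> (\<lambda>m. coord_norm B (xs m)) \<longlonglongrightarrow> 0"
proof
  assume null: "PN_null \<nu> xs"
  show "(\<lambda>m. coord_norm B (xs m)) \<longlonglongrightarrow> 0"
  proof (rule ccontr)
    assume "\<not> ?thesis"
    then obtain \<delta> and r :: "nat \<Rightarrow> nat"
      where "\<delta> > 0" "strict_mono r" and away: "\<And>n. \<delta> \<le> coord_norm B (xs (r n))"
      using nonneg_not_LIMSEQ_zero_subseq coord_norm_nonneg by metis
    define ys where "ys n = (\<delta> / coord_norm B (xs (r n))) *\<^sub>R xs (r n)" for n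
    have "coord_norm B (ys n) = \<delta>" for n
      using away[of n] \<open>\<delta> > 0\<close> B(3)
      unfolding ys_def by (simp add: coord_norm_scaleR[OF B(2)])
    moreover have "PN_null \<nu> ys"
    proof (rule PN_null_mono[OF PN_null_subseq[OF null \<open>strict_mono r\<close>]])
      fix n
      have "\<bar>\<delta> / coord_norm B (xs (r n))\<bar> \<le> 1"
        using away[of n] \<open>\<delta> > 0\<close> by simp
      thus "\<nu> (xs (r n)) \<le> \<nu> (ys n)"
        unfolding ys_def by (rule nu_le_scaleR)
    qed
    ultimately show False
      using not_PN_null_if_coord_norm_eq[OF B \<open>\<delta> > 0\<close>] by blast
  qed
next
  assume "(\<lambda>m. coord_norm B (xs m)) \<longlonglongrightarrow> 0"
  hence "(\<lambda>m. representation B (xs m) b) \<longlonglongrightarrow> 0" for b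
    by (rule Lim_null_comparison[rotated])
       (simp add: abs_representation_le_coord_norm[OF B(1)])
  hence "PN_null \<nu> (\<lambda>m. \<Sum>b\<in>B. representation B (xs m) b *\<^sub>R b)"
    by (rule PN_null_sum[OF B(1)])
  moreover have "(\<Sum>b\<in>B. representation B x b *\<^sub>R b) = x" for x
    using real_vector.sum_representation_eq[OF B(2) _ B(1) order_refl] B(3) by blast
  ultimately show "PN_null \<nu> xs" by simp
qed

end

theorem theorem20:
  fixes \<nu> \<mu> :: "'a::real_vector \<Rightarrow> dd"
    and T Ts T' Ts' :: "dd \<Rightarrow> dd \<Rightarrow> dd"
  assumes "\<exists>B. finite B \<and> span B = (UNIV :: 'a set)"
    and "PN_space \<nu> T Ts" and "PN_space \<mu> T' Ts'"
    and "archimedean_tf Ts" and "archimedean_tf Ts'"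
    and "\<forall>p. \<nu> p \<noteq> eps_inf" and "\<forall>p. \<mu> p \<noteq> eps_inf"
  shows "\<forall>ps p. strongly_converges \<nu> ps p \<longleftrightarrow> strongly_converges \<mu> ps p"
proof -
  from assms(1) obtain S :: "'a set" where "finite S" "span S = UNIV" by blast
  then obtain B :: "'a set" where B: "finite B" "independent B" "span B = UNIV"
    by (rule finite_basis_if_finite_span)
  interpret nu: archimedean_PN \<nu> T Ts
    using assms(2,4,6) by (simp add: archimedean_PN_def archimedean_PN_axioms_def PN_def)
  interpret mu: archimedean_PN \<mu> T' Ts'
    using assms(3,5,7) by (simp add: archimedean_PN_def archimedean_PN_axioms_def PN_def)
  show ?thesis
    by (simp add: nu.strongly_converges_iff_PN_null mu.strongly_converges_iff_PN_null
        nu.PN_null_iff_coord_norm_tendsto_zero[OF B] mu.PN_null_iff_coord_norm_tendsto_zero[OF B])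
qed

end
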